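(* Let $G$ be a simple graph on $n$ vertices with $cM_2(G)\ge cM_2(H)$ for every simple graph $H$ on $n$ vertices, and let $F$, $X$, $Y$, $N^+_F$ be as defined in the context. Then $N^+_F(u)\cap Y=N^+_F(v)\cap Y$ for all $u,v\in X$.
   Context: All graphs are finite and simple; $d_G(u)$ is the degree of $u$ and $cM_2(G)=\sum_{uv\in E(G)}|d_G(u)^2-d_G(v)^2|$. The canonical mixed graph $F$ of $G$ has vertex set $V(G)$; for each edge $uv\in E(G)$: if $d_G(u)>d_G(v)$ then $F$ contains the arc $\overrightarrow{uv}$, and if $d_G(u)=d_G(v)$ then $F$ contains the undirected edge $uv$. $d^+_F(u)$ (resp. $d^-_F(u)$) is the number of arcs of $F$ with tail (resp. head) $u$; $N^+_F(u)=\{w:\overrightarrow{uw}\in A(F)\}$. $X=\{u\in V(G): d^+_F(u)\ge d^-_F(u)\}$ and $Y=\{u\in V(G): d^+_F(u)< d^-_F(u)\}$. *)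

theory Defs
  imports Main
begin

definition simple_graph :: "'a set \<Rightarrow> 'a set set \<Rightarrow> bool" where
  "simple_graph V E \<longleftrightarrow> finite V \<and> (\<forall>e\<in>E. \<exists>u v. u \<in> V \<and> v \<in> V \<and> u \<noteq> v \<and> e = {u, v})"

definition deg :: "'a set set \<Rightarrow> 'a \<Rightarrow> nat" where
  "deg E u = card {e \<in> E. u \<in> e}"

(* cM_2(G) = sum over edges uv of |d(u)^2 - d(v)^2|; each unordered edge counted once
   (written as half the sum over ordered pairs, each edge giving two ordered pairs). *)
definition cM2 :: "'a set set \<Rightarrow> int" where
  "cM2 E = (\<Sum>(u, v)\<in>{(u, v). {u, v} \<in> E \<and> u \<noteq> v}.
              \<bar>int (deg E u)^2 - int (deg E v)^2\<bar>) div 2"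

(* arcs of the canonical mixed graph F: u -> w iff uw is an edge and d(u) > d(w) *)
definition arc :: "'a set set \<Rightarrow> 'a \<Rightarrow> 'a \<Rightarrow> bool" where
  "arc E u w \<longleftrightarrow> {u, w} \<in> E \<and> u \<noteq> w \<and> deg E u > deg E w"

definition outdeg :: "'a set set \<Rightarrow> 'a \<Rightarrow> nat" where
  "outdeg E u = card {w. arc E u w}"

definition indeg :: "'a set set \<Rightarrow> 'a \<Rightarrow> nat" where
  "indeg E u = card {w. arc E w u}"

definition out_nbrs :: "'a set set \<Rightarrow> 'a \<Rightarrow> 'a set" where
  "out_nbrs E u = {w. arc E u w}"

definition Xset :: "'a set \<Rightarrow> 'a set set \<Rightarrow> 'a set" where
  "Xset V E = {u \<in> V. outdeg E u \<ge> indeg E u}"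

definition Yset :: "'a set \<Rightarrow> 'a set set \<Rightarrow> 'a set" where
  "Yset V E = {u \<in> V. outdeg E u < indeg E u}"

end

theory Submission
  imports Defs
begin

text \<open>
  Write the canonical mixed graph through the excess \<open>t(v) = d\<^sup>-(v) - d\<^sup>+(v)\<close>, so that
  \<open>Y = {v. t(v) > 0}\<close>. Summing \<open>d(a)\<^sup>2 - d(b)\<^sup>2\<close> over the arcs \<open>a \<rightarrow> b\<close> gives
  \<open>cM\<^sub>2(G) = \<Sum>\<^sub>v ((n-1)\<^sup>2 - d(v)\<^sup>2) t(v)\<close>; the vertices of \<open>X\<close> contribute at most \<open>0\<close> and
  a vertex of \<open>Y\<close> at most \<open>g(t(v))\<close>, where \<open>g(t) = t((n-1)\<^sup>2 - t\<^sup>2)\<close>. Moreover the total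
  excess of \<open>Y\<close> is at most the number of arcs from \<open>X\<close> to \<open>Y\<close>, hence at most \<open>|X||Y|\<close>.
  On the other hand the split graph with a dominating clique of size \<open>k\<close> has
  \<open>cM\<^sub>2 = (n-k) g(k)\<close>. A discrete concavity argument for \<open>g\<close> shows that if some vertex
  of \<open>Y\<close> had excess below \<open>|X|\<close>, then \<open>\<Sum>\<^sub>Y g(t(v))\<close> would fall strictly below some
  \<open>(n-k) g(k)\<close>, contradicting maximality. So every vertex of \<open>Y\<close> has excess at least
  \<open>|X|\<close>, all \<open>|X||Y|\<close> arcs from \<open>X\<close> to \<open>Y\<close> are present, and \<open>N\<^sup>+(u) \<inter> Y = Y\<close> for
  every \<open>u \<in> X\<close>.
\<close>

definition gain :: "int \<Rightarrow> int \<Rightarrow> int" where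
  "gain N t = t * (N\<^sup>2 - t\<^sup>2)"

lemma gain_secant_identity:
  "gain N t - gain N x - (gain N (x + 1) - gain N x) * (t - x)
    = (t - x) * (3 * x + 1) - (t - x)\<^sup>2 * (2 * x + t)"
  unfolding gain_def by (simp add: algebra_simps power2_eq_square)

lemma gain_le_secant:
  assumes "0 \<le> t" "0 \<le> x"
  shows "gain N t \<le> gain N x + (gain N (x + 1) - gain N x) * (t - x)"
proof (cases "t \<le> x")
  case True
  have "(t - x) * (3 * x + 1) \<le> 0" using True assms by (simp add: mult_nonpos_nonneg)
  moreover have "0 \<le> (t - x)\<^sup>2 * (2 * x + t)" using assms by simp
  ultimately show ?thesis using gain_secant_identity[of N t x] by linarith
next
  case False
  then have "(t - x) * (3 * x + 1) \<le> (t - x) * (2 * x + t)" by (intro mult_left_mono) auto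
  also have "\<dots> \<le> (t - x)\<^sup>2 * (2 * x + t)"
    using False assms by (intro mult_right_mono) (auto simp: power2_eq_square)
  finally show ?thesis using gain_secant_identity[of N t x] by linarith
qed

lemma gain_less_secant:
  assumes "0 \<le> t" "t < x"
  shows "gain N t < gain N x + (gain N (x + 1) - gain N x) * (t - x)"
proof -
  have "(t - x) * (3 * x + 1) < 0" using assms by (simp add: mult_neg_pos)
  moreover have "0 \<le> (t - x)\<^sup>2 * (2 * x + t)" using assms by simp
  ultimately show ?thesis using gain_secant_identity[of N t x] by linarith
qed

lemma gain_le_first_descent:
  assumes descent: "gain N (int a + 1) \<le> gain N (int a)"
    and ascent: "\<forall>b<a. gain N (int b) < gain N (int b + 1)"
    and "0 \<le> s"
  shows "gain N s \<le> gain N (int a)" and "s < int a \<Longrightarrow> gain N s < gain N (int a)"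
proof -
  have below: "gain N s < gain N (int a)" if "s < int a"
  proof -
    obtain b where a: "a = Suc b" using \<open>s < int a\<close> \<open>0 \<le> s\<close> by (cases a) auto
    have "gain N s \<le> gain N (int b) + (gain N (int b + 1) - gain N (int b)) * (s - int b)"
      using gain_le_secant \<open>0 \<le> s\<close> by simp
    also have "\<dots> \<le> gain N (int b)"
      using ascent that a by (simp add: mult_nonneg_nonpos less_imp_le)
    also have "\<dots> < gain N (int b + 1)" using ascent a by blast
    also have "int b + 1 = int a" using a by simp
    finally show ?thesis .
  qed
  show "gain N s < gain N (int a)" if "s < int a" using below that .
  show "gain N s \<le> gain N (int a)"
  proof (cases "s < int a")
    case False
    have "gain N s \<le> gain N (int a) + (gain N (int a + 1) - gain N (int a)) * (s - int a)"
      using gain_le_secant \<open>0 \<le> s\<close> by simp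
    also have "\<dots> \<le> gain N (int a)" using descent False by (simp add: mult_nonpos_nonneg)
    finally show ?thesis .
  qed (use below in auto)
qed

lemma gain_first_descent_exists:
  assumes "0 \<le> N"
  obtains a where "gain N (int a + 1) \<le> gain N (int a)"
    and "\<forall>b<a. gain N (int b) < gain N (int b + 1)"
proof -
  define a where "a = (LEAST a::nat. gain N (int a + 1) \<le> gain N (int a))"
  have "gain N (N + 1) = - ((N + 1) * (2 * N + 1))" "gain N N = 0"
    unfolding gain_def by (simp_all add: power2_eq_square algebra_simps)
  then have "gain N (int (nat N) + 1) \<le> gain N (int (nat N))"
    using assms by simp
  then have "gain N (int a + 1) \<le> gain N (int a)"
    unfolding a_def by (rule LeastI)
  moreover have "\<forall>b<a. gain N (int b) < gain N (int b + 1)"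
    unfolding a_def using not_less_Least by force
  ultimately show ?thesis using that by blast
qed

lemma sum_gain_less_below_ascent:
  assumes fin: "finite Y" and nonneg: "\<forall>v\<in>Y. 0 \<le> t v"
    and v0: "v0 \<in> Y" "t v0 < x"
    and ascent: "gain N x \<le> gain N (x + 1)"
    and sum_t: "(\<Sum>v\<in>Y. t v) \<le> x * int (card Y)"
  shows "(\<Sum>v\<in>Y. gain N (t v)) < int (card Y) * gain N x"
proof -
  define slope where "slope = gain N (x + 1) - gain N x"
  have "0 \<le> x" using nonneg v0 by force
  then have "(\<Sum>v\<in>Y. gain N (t v)) < (\<Sum>v\<in>Y. gain N x + slope * (t v - x))"
    using fin nonneg v0 gain_le_secant gain_less_secant[of "t v0" x N] unfolding slope_def
    by (intro sum_strict_mono_ex1) auto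
  also have "\<dots> = int (card Y) * gain N x + slope * ((\<Sum>v\<in>Y. t v) - x * int (card Y))"
    by (simp add: sum.distrib sum_subtractf right_diff_distrib flip: sum_distrib_left)
  also have "\<dots> \<le> int (card Y) * gain N x"
    using ascent sum_t by (simp add: slope_def mult_nonneg_nonpos)
  finally show ?thesis .
qed

lemma sum_gain_less_split_value:
  fixes x :: nat and Y :: "'v set" and t :: "'v \<Rightarrow> int"
  defines "y \<equiv> card Y" and "N \<equiv> int x + int (card Y) - 1"
  assumes fin: "finite Y" and nonneg: "\<forall>v\<in>Y. 0 \<le> t v"
    and v0: "v0 \<in> Y" "1 \<le> t v0" "t v0 < int x"
    and sum_t: "(\<Sum>v\<in>Y. t v) \<le> int x * int y"
  shows "\<exists>k\<le>x + y. (\<Sum>v\<in>Y. gain N (t v)) < int (x + y - k) * gain N (int k)"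
proof -
  have "0 \<le> N" using v0 unfolding N_def by simp
  then obtain a where descent: "gain N (int a + 1) \<le> gain N (int a)"
    and ascent: "\<forall>b<a. gain N (int b) < gain N (int b + 1)"
    by (rule gain_first_descent_exists)
  note gain_max = gain_le_first_descent[OF descent ascent]
  consider "x < a" | "x = a" | "a < x" by linarith
  then show ?thesis
  proof cases
    case 1
    then have "(\<Sum>v\<in>Y. gain N (t v)) < int y * gain N (int x)"
      using sum_gain_less_below_ascent[OF fin nonneg v0(1,3)] ascent sum_t
      by (simp add: y_def less_imp_le)
    then show ?thesis by (intro exI[of _ x]) simp
  next
    case 2
    then have "(\<Sum>v\<in>Y. gain N (t v)) < (\<Sum>v\<in>Y. gain N (int x))"
      using fin nonneg v0 gain_max by (intro sum_strict_mono_ex1) auto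
    then show ?thesis by (intro exI[of _ x]) (simp add: y_def)
  next
    case 3
    have "x \<ge> 2" "y \<ge> 1" using v0 fin by (auto simp: y_def Suc_le_eq card_gt_0_iff)
    then have "2 \<le> N" unfolding N_def y_def by simp
    then have "2 * 2 \<le> N * N" by (intro mult_mono) auto
    then have "0 < gain N 1" unfolding gain_def by (simp add: power2_eq_square)
    also have "gain N 1 \<le> gain N (int a)" using gain_max by simp
    finally have "0 < gain N (int a)" .
    have "(\<Sum>v\<in>Y. gain N (t v)) \<le> int y * gain N (int a)"
      using gain_max nonneg sum_mono[of Y "\<lambda>v. gain N (t v)" "\<lambda>_. gain N (int a)"]
      by (simp add: y_def)
    also have "\<dots> < int (x + y - a) * gain N (int a)"
      using 3 \<open>0 < gain N (int a)\<close> by (intro mult_strict_right_mono) auto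
    finally show ?thesis using 3 by (intro exI[of _ a]) auto
  qed
qed

lemma simple_graph_finite_vertices: "simple_graph V E \<Longrightarrow> finite V"
  unfolding simple_graph_def by simp

lemma simple_graph_edge_in_vertices:
  assumes "simple_graph V E" "{a, b} \<in> E"
  shows "a \<in> V" "b \<in> V" "a \<noteq> b"
proof -
  obtain u w where "u \<in> V" "w \<in> V" "u \<noteq> w" "{a, b} = {u, w}"
    using assms unfolding simple_graph_def by blast
  then show "a \<in> V" "b \<in> V" "a \<noteq> b" by (auto simp: doubleton_eq_iff)
qed

lemma deg_eq_card_neighbours:
  assumes "simple_graph V E"
  shows "deg E v = card {w. {v, w} \<in> E}"
proof -
  have "{e \<in> E. v \<in> e} = (\<lambda>w. {v, w}) ` {w. {v, w} \<in> E}"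
  proof (intro equalityI subsetI)
    fix e assume e: "e \<in> {e \<in> E. v \<in> e}"
    then obtain a b where "e = {a, b}" using assms unfolding simple_graph_def by blast
    then have "e = {v, if a = v then b else a}" using e by auto
    then show "e \<in> (\<lambda>w. {v, w}) ` {w. {v, w} \<in> E}" using e by auto
  qed auto
  moreover have "inj_on (\<lambda>w. {v, w}) {w. {v, w} \<in> E}"
    by (auto simp: inj_on_def doubleton_eq_iff)
  ultimately show ?thesis unfolding deg_def by (simp add: card_image)
qed

lemma deg_le_card_minus_one:
  assumes "simple_graph V E"
  shows "deg E v \<le> card V - 1"
proof (cases "v \<in> V")
  case True
  have "{w. {v, w} \<in> E} \<subseteq> V - {v}"
    using simple_graph_edge_in_vertices[OF assms] by blast
  then have "card {w. {v, w} \<in> E} \<le> card (V - {v})"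
    using simple_graph_finite_vertices[OF assms] by (intro card_mono) auto
  moreover have "card (V - {v}) = card V - 1"
    using True simple_graph_finite_vertices[OF assms] by simp
  ultimately show ?thesis by (simp add: deg_eq_card_neighbours[OF assms])
next
  case False
  then have "{w. {v, w} \<in> E} = {}"
    using simple_graph_edge_in_vertices(1)[OF assms] by blast
  then show ?thesis by (simp add: deg_eq_card_neighbours[OF assms])
qed

lemma indeg_le_deg:
  assumes "simple_graph V E"
  shows "indeg E v \<le> deg E v"
proof -
  have "{w. {v, w} \<in> E} \<subseteq> V"
    using simple_graph_edge_in_vertices(2)[OF assms] by blast
  then have "finite {w. {v, w} \<in> E}"
    using simple_graph_finite_vertices[OF assms] by (rule finite_subset)
  moreover have "{w. arc E w v} \<subseteq> {w. {v, w} \<in> E}"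
    unfolding arc_def by (simp add: Collect_mono insert_commute)
  ultimately show ?thesis
    unfolding indeg_def deg_eq_card_neighbours[OF assms] by (rule card_mono)
qed

definition arcs :: "'a set set \<Rightarrow> ('a \<times> 'a) set" where
  "arcs E = {(a, b). arc E a b}"

definition excess :: "'a set set \<Rightarrow> 'a \<Rightarrow> int" where
  "excess E v = int (indeg E v) - int (outdeg E v)"

lemma arcs_subset_vertices:
  assumes "simple_graph V E"
  shows "arcs E \<subseteq> V \<times> V"
  unfolding arcs_def arc_def using simple_graph_edge_in_vertices(1,2)[OF assms] by blast

lemma finite_arcs:
  assumes "simple_graph V E"
  shows "finite (arcs E)"
  using arcs_subset_vertices[OF assms] simple_graph_finite_vertices[OF assms]
  by (simp add: finite_subset)

lemma sum_over_fibres: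
  fixes f :: "'b \<Rightarrow> 'c::comm_semiring_1"
  assumes "finite A" "finite B" "\<pi> ` A \<subseteq> B"
  shows "(\<Sum>p\<in>A. f (\<pi> p)) = (\<Sum>v\<in>B. f v * of_nat (card {p \<in> A. \<pi> p = v}))"
proof -
  have "(\<Sum>p\<in>A. f (\<pi> p)) = (\<Sum>v\<in>B. \<Sum>p\<in>{p \<in> A. \<pi> p = v}. f (\<pi> p))"
    by (rule sum.group[OF assms, symmetric])
  also have "\<dots> = (\<Sum>v\<in>B. f v * of_nat (card {p \<in> A. \<pi> p = v}))"
  proof (rule sum.cong[OF refl])
    fix v
    have "(\<Sum>p\<in>{p \<in> A. \<pi> p = v}. f (\<pi> p)) = (\<Sum>p\<in>{p \<in> A. \<pi> p = v}. f v)"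
      by (rule sum.cong) auto
    then show "(\<Sum>p\<in>{p \<in> A. \<pi> p = v}. f (\<pi> p)) = f v * of_nat (card {p \<in> A. \<pi> p = v})"
      by (simp add: mult.commute)
  qed
  finally show ?thesis .
qed

lemma card_arcs_into: "card {p \<in> arcs E. snd p = v} = indeg E v"
proof -
  have "{p \<in> arcs E. snd p = v} = (\<lambda>a. (a, v)) ` {a. arc E a v}" by (auto simp: arcs_def)
  then show ?thesis unfolding indeg_def by (simp add: card_image inj_on_def)
qed

lemma card_arcs_out_of: "card {p \<in> arcs E. fst p = v} = outdeg E v"
proof -
  have "{p \<in> arcs E. fst p = v} = (\<lambda>b. (v, b)) ` {b. arc E v b}" by (auto simp: arcs_def)
  then show ?thesis unfolding outdeg_def by (simp add: card_image inj_on_def)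
qed

lemma sum_arcs_potential_difference:
  assumes "simple_graph V E"
  shows "(\<Sum>(a, b)\<in>arcs E. g b - g a) = (\<Sum>v\<in>V. g v * excess E v)"
proof -
  have fin: "finite (arcs E)" "finite V"
    using finite_arcs[OF assms] simple_graph_finite_vertices[OF assms] .
  have "snd ` arcs E \<subseteq> V" "fst ` arcs E \<subseteq> V" using arcs_subset_vertices[OF assms] by auto
  from sum_over_fibres[OF fin this(1), of g] sum_over_fibres[OF fin this(2), of g]
  have "(\<Sum>p\<in>arcs E. g (snd p)) = (\<Sum>v\<in>V. g v * int (indeg E v))"
    "(\<Sum>p\<in>arcs E. g (fst p)) = (\<Sum>v\<in>V. g v * int (outdeg E v))"
    by (simp_all add: card_arcs_into card_arcs_out_of)
  then show ?thesis
    by (simp add: case_prod_beta sum_subtractf excess_def right_diff_distrib)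
qed

lemma cM2_eq_sum_arcs:
  assumes "simple_graph V E"
  shows "cM2 E = (\<Sum>(a, b)\<in>arcs E. int (deg E a)^2 - int (deg E b)^2)"
proof -
  define P where "P = {(u, v). {u, v} \<in> E \<and> u \<noteq> v}"
  define D where "D = (\<lambda>(a, b). int (deg E a)^2 - int (deg E b)^2)"
  define D_up where "D_up p = (if deg E (snd p) < deg E (fst p) then D p else 0)" for p
  have "P \<subseteq> V \<times> V" unfolding P_def using simple_graph_edge_in_vertices[OF assms] by blast
  then have "finite P" using simple_graph_finite_vertices[OF assms] by (simp add: finite_subset)
  have "prod.swap ` P = P" unfolding P_def by (auto simp: insert_commute)
  then have "(\<Sum>p\<in>P. D_up (prod.swap p)) = (\<Sum>p\<in>P. D_up p)"
    using sum.reindex[of prod.swap P D_up] by simp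
  moreover have "\<bar>D p\<bar> = D_up p + D_up (prod.swap p)" for p
    unfolding D_up_def D_def by (cases p) auto
  moreover have "(\<Sum>p\<in>P. D_up p) = (\<Sum>p\<in>arcs E. D p)"
  proof -
    have "{p \<in> P. deg E (snd p) < deg E (fst p)} = arcs E"
      unfolding P_def arcs_def arc_def by auto
    then show ?thesis
      using sum.inter_filter[OF \<open>finite P\<close>, of D "\<lambda>p. deg E (snd p) < deg E (fst p)"]
      unfolding D_up_def by simp
  qed
  ultimately have "(\<Sum>p\<in>P. \<bar>D p\<bar>) = 2 * (\<Sum>p\<in>arcs E. D p)"
    by (simp add: sum.distrib)
  moreover have "cM2 E = (\<Sum>p\<in>P. \<bar>D p\<bar>) div 2"
    unfolding cM2_def P_def D_def by (simp add: case_prod_beta)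
  ultimately show ?thesis unfolding D_def by simp
qed

lemma cM2_eq_sum_excess:
  assumes "simple_graph V E"
  shows "cM2 E = (\<Sum>v\<in>V. (N\<^sup>2 - int (deg E v)^2) * excess E v)"
  unfolding cM2_eq_sum_arcs[OF assms]
    sum_arcs_potential_difference[OF assms, of "\<lambda>v. N\<^sup>2 - int (deg E v)^2", symmetric]
  by (simp add: case_prod_beta)

lemma cM2_nonneg: "0 \<le> cM2 E"
  unfolding cM2_def by (intro pos_imp_zdiv_nonneg_iff[THEN iffD2] sum_nonneg) auto

lemma sum_excess_le_card_entering_arcs:
  assumes "simple_graph V E" "S \<subseteq> V"
  shows "(\<Sum>v\<in>S. excess E v) \<le> int (card (arcs E \<inter> (V - S) \<times> S))"
proof -
  define g where "g v = (if v \<in> S then 1 else 0 :: int)" for v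
  have "finite V" using assms(1) by (rule simple_graph_finite_vertices)
  have "g v * excess E v = (if v \<in> S then excess E v else 0)" for v by (simp add: g_def)
  then have "(\<Sum>v\<in>S. excess E v) = (\<Sum>v\<in>V. g v * excess E v)"
    using assms(2) \<open>finite V\<close> by (simp add: sum.inter_restrict[symmetric] Int_absorb1)
  also have "\<dots> = (\<Sum>(a, b)\<in>arcs E. g b - g a)"
    by (rule sum_arcs_potential_difference[OF assms(1), symmetric])
  also have "\<dots> \<le> (\<Sum>p\<in>arcs E. if p \<in> (V - S) \<times> S then 1 else 0)"
    using arcs_subset_vertices[OF assms(1)] unfolding g_def by (intro sum_mono) (auto split: if_splits)
  also have "\<dots> = int (card (arcs E \<inter> (V - S) \<times> S))"
    using finite_arcs[OF assms(1)] by (simp add: sum.If_cases)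
  finally show ?thesis .
qed

lemma Xset_Yset_partition: "Xset V E \<union> Yset V E = V" "Xset V E \<inter> Yset V E = {}"
  unfolding Xset_def Yset_def by auto

lemma cM2_le_sum_gain_excess:
  assumes "simple_graph V E"
  shows "cM2 E \<le> (\<Sum>v\<in>Yset V E. gain (int (card V) - 1) (excess E v))"
proof -
  define N where "N = int (card V) - 1"
  define g where "g v = N\<^sup>2 - int (deg E v)^2" for v
  have "finite V" using assms by (rule simple_graph_finite_vertices)
  then have fin: "finite (Xset V E)" "finite (Yset V E)" unfolding Xset_def Yset_def by simp_all
  have "cM2 E = (\<Sum>v\<in>Xset V E. g v * excess E v) + (\<Sum>v\<in>Yset V E. g v * excess E v)"
    unfolding cM2_eq_sum_excess[OF assms, of N] g_def
    using sum.union_disjoint[OF fin Xset_Yset_partition(2)] by (simp add: Xset_Yset_partition(1))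
  also have "\<dots> \<le> 0 + (\<Sum>v\<in>Yset V E. gain N (excess E v))"
  proof (intro add_mono sum_nonpos sum_mono)
    fix v assume "v \<in> Xset V E"
    then have "excess E v \<le> 0" "card V \<ge> 1"
      by (auto simp: Xset_def excess_def \<open>finite V\<close> Suc_le_eq card_gt_0_iff)
    moreover have "int (deg E v) \<le> N"
      using deg_le_card_minus_one[OF assms, of v] \<open>card V \<ge> 1\<close> by (simp add: N_def)
    then have "0 \<le> g v" unfolding g_def by (simp add: power_mono)
    ultimately show "g v * excess E v \<le> 0" by (simp add: mult_nonneg_nonpos)
  next
    fix v assume "v \<in> Yset V E"
    then have "0 \<le> excess E v" by (simp add: Yset_def excess_def)
    moreover have "excess E v \<le> int (deg E v)"
      using indeg_le_deg[OF assms, of v] by (simp add: excess_def)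
    ultimately have "g v \<le> N\<^sup>2 - (excess E v)\<^sup>2" unfolding g_def by (simp add: power_mono)
    then have "g v * excess E v \<le> (N\<^sup>2 - (excess E v)\<^sup>2) * excess E v"
      using \<open>0 \<le> excess E v\<close> by (rule mult_right_mono)
    then show "g v * excess E v \<le> gain N (excess E v)" unfolding gain_def by (simp add: mult.commute)
  qed
  finally show ?thesis by (simp add: N_def)
qed

definition split_graph :: "'a set \<Rightarrow> 'a set \<Rightarrow> 'a set set" where
  "split_graph V K = {{a, b} | a b. a \<in> K \<and> b \<in> V \<and> a \<noteq> b}"

lemma simple_graph_split_graph:
  assumes "finite V" "K \<subseteq> V"
  shows "simple_graph V (split_graph V K)"
  using assms unfolding simple_graph_def split_graph_def by blast

lemma neighbours_split_graph:
  assumes "K \<subseteq> V" "a \<in> V"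
  shows "{w. {a, w} \<in> split_graph V K} = (if a \<in> K then V - {a} else K)"
  using assms unfolding split_graph_def by (auto simp: doubleton_eq_iff)

lemma deg_split_graph:
  assumes "finite V" "K \<subseteq> V" "a \<in> V"
  shows "deg (split_graph V K) a = (if a \<in> K then card V - 1 else card K)"
  using assms
  by (simp add: deg_eq_card_neighbours[OF simple_graph_split_graph] neighbours_split_graph)

lemma arcs_split_graph:
  assumes "finite V" "K \<subseteq> V" "card K + 1 < card V"
  shows "arcs (split_graph V K) = K \<times> (V - K)"
proof -
  have "arc (split_graph V K) a b \<longleftrightarrow> a \<in> K \<and> b \<in> V - K" if "a \<in> V" "b \<in> V" for a b
  proof -
    have "{a, b} \<in> split_graph V K \<longleftrightarrow> b \<in> (if a \<in> K then V - {a} else K)"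
      using neighbours_split_graph[OF assms(2) \<open>a \<in> V\<close>] by blast
    then show ?thesis
      using that assms unfolding arc_def by (auto simp: deg_split_graph)
  qed
  then show ?thesis
    using arcs_subset_vertices[OF simple_graph_split_graph[OF assms(1,2)]] assms(2)
    unfolding arcs_def by auto
qed

lemma cM2_split_graph:
  assumes "finite V" "K \<subseteq> V" "card K + 1 < card V"
  shows "cM2 (split_graph V K) = int (card V - card K) * gain (int (card V) - 1) (int (card K))"
proof -
  have "cM2 (split_graph V K) = (\<Sum>(a, b)\<in>K \<times> (V - K). int (card V - 1)^2 - int (card K)^2)"
    unfolding cM2_eq_sum_arcs[OF simple_graph_split_graph[OF assms(1,2)]] arcs_split_graph[OF assms]
    using assms by (intro sum.cong) (auto simp: deg_split_graph subset_iff)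
  also have "\<dots> = int (card V - card K) * gain (int (card V) - 1) (int (card K))"
    using assms finite_subset[OF assms(2,1)]
    by (simp add: card_cartesian_product card_Diff_subset of_nat_diff gain_def algebra_simps)
  finally show ?thesis .
qed

lemma split_value_le_maximal_cM2:
  fixes V :: "'a set" and E :: "'a set set"
  assumes "simple_graph V E"
    and maximal: "\<forall>V' (E' :: 'a set set). simple_graph V' E' \<and> card V' = card V \<longrightarrow> cM2 E' \<le> cM2 E"
    and "k \<le> card V"
  shows "int (card V - k) * gain (int (card V) - 1) (int k) \<le> cM2 E"
proof (cases "k + 1 < card V")
  case True
  obtain K where K: "K \<subseteq> V" "card K = k"
    using obtain_subset_with_card_n[OF \<open>k \<le> card V\<close>] by blast
  have "finite V" using assms(1) by (rule simple_graph_finite_vertices)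
  then have "cM2 (split_graph V K) \<le> cM2 E"
    using maximal simple_graph_split_graph[OF _ K(1)] by simp
  moreover have "cM2 (split_graph V K) = int (card V - k) * gain (int (card V) - 1) (int k)"
    using cM2_split_graph[OF \<open>finite V\<close> K(1)] K True by simp
  ultimately show ?thesis by simp
next
  case False
  then have "int (card V - k) * gain (int (card V) - 1) (int k) = 0"
    using \<open>k \<le> card V\<close> by (cases "k = card V") (auto simp: gain_def of_nat_diff)
  then show ?thesis using cM2_nonneg[of E] by linarith
qed

lemma maximal_cM2_arcs_from_Xset_to_Yset:
  fixes V :: "'a set" and E :: "'a set set"
  assumes graph: "simple_graph V E"
    and maximal: "\<forall>V' (E' :: 'a set set). simple_graph V' E' \<and> card V' = card V \<longrightarrow> cM2 E' \<le> cM2 E"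
  shows "Xset V E \<times> Yset V E \<subseteq> arcs E"
proof -
  define X Y where "X = Xset V E" and "Y = Yset V E"
  define x y where "x = card X" and "y = card Y"
  have "finite V" using graph by (rule simple_graph_finite_vertices)
  then have fin: "finite X" "finite Y" unfolding X_def Y_def Xset_def Yset_def by simp_all
  have "X \<union> Y = V" "X \<inter> Y = {}" using Xset_Yset_partition unfolding X_def Y_def .
  then have "card V = x + y" "Y \<subseteq> V" "V - Y = X"
    using card_Un_disjoint[OF fin] unfolding x_def y_def by auto
  have excess_pos: "1 \<le> excess E v" if "v \<in> Y" for v
    using that by (simp add: Y_def Yset_def excess_def)
  have entering: "(\<Sum>v\<in>Y. excess E v) \<le> int (card (arcs E \<inter> X \<times> Y))"
    using sum_excess_le_card_entering_arcs[OF graph \<open>Y \<subseteq> V\<close>] \<open>V - Y = X\<close> by simp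
  have card_le: "card (arcs E \<inter> X \<times> Y) \<le> card (X \<times> Y)"
    using fin by (intro card_mono) auto
  then have "int (card (arcs E \<inter> X \<times> Y)) \<le> int (card (X \<times> Y))" by simp
  with entering have sum_excess: "(\<Sum>v\<in>Y. excess E v) \<le> int x * int y"
    by (simp add: card_cartesian_product x_def y_def)
  have "int x \<le> excess E v" if v: "v \<in> Y" for v
  proof (rule ccontr)
    assume "\<not> int x \<le> excess E v"
    moreover have nonneg: "\<forall>w\<in>Y. 0 \<le> excess E w" using excess_pos by force
    ultimately obtain k where "k \<le> x + y"
      and "(\<Sum>w\<in>Y. gain (int x + int y - 1) (excess E w)) < int (x + y - k) * gain (int x + int y - 1) (int k)"
      using sum_gain_less_split_value[OF fin(2) nonneg v excess_pos[OF v], of x] sum_excess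
      unfolding y_def by auto
    then show False
      using cM2_le_sum_gain_excess[OF graph] split_value_le_maximal_cM2[OF graph maximal, of k]
      by (simp add: \<open>card V = x + y\<close> Y_def)
  qed
  then have "int x * int y \<le> (\<Sum>v\<in>Y. excess E v)"
    using sum_mono[of Y "\<lambda>_. int x" "excess E"] by (simp add: y_def mult.commute)
  then have "int (card (X \<times> Y)) \<le> int (card (arcs E \<inter> X \<times> Y))"
    using entering by (simp add: card_cartesian_product x_def y_def)
  then have "card (arcs E \<inter> X \<times> Y) = card (X \<times> Y)"
    using card_le by linarith
  then have "arcs E \<inter> X \<times> Y = X \<times> Y"
    using fin by (intro card_subset_eq) auto
  then show ?thesis unfolding X_def Y_def by blast
qed

theorem claim6:
  fixes V :: "'a set" and E :: "'a set set"
  assumes "simple_graph V E"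
    and "\<forall>V' (E' :: 'a set set). simple_graph V' E' \<and> card V' = card V \<longrightarrow> cM2 E' \<le> cM2 E"
    and "u \<in> Xset V E" and "v \<in> Xset V E"
  shows "out_nbrs E u \<inter> Yset V E = out_nbrs E v \<inter> Yset V E"
proof -
  have "out_nbrs E w \<inter> Yset V E = Yset V E" if "w \<in> Xset V E" for w
    using maximal_cM2_arcs_from_Xset_to_Yset[OF assms(1,2)] that
    by (auto simp: out_nbrs_def arcs_def)
  then show ?thesis using assms(3,4) by simp
qed

end
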